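(* Let $\mathcal W$ be countable, $\ell:\mathcal W\times\mathsf Z\to\mathbb R$ a loss, $Q$ a probability distribution on $\mathcal W$ and $\gamma>0$. Let $\mu$ be a distribution on $\mathsf Z$ such that $\ell(w,Z)$, $Z\sim\mu$, is $\sigma^2$-subgaussian for every $w\in\mathcal W$, and let $\widehat w(\mu)\in\mathcal W$ achieve the minimum of $L_\mu$ over $\mathcal W$. Then $$\mathrm{risk}(\mu,P^{\gamma,Q}_{W|S})\le\inf_{w\in\mathcal W}L_\mu(w)+\frac1\gamma D(\delta_{\widehat w(\mu)}\|Q)+\frac{\gamma\sigma^2}{2n}.$$
   Context: $S=(Z_1,\dots,Z_n)$ i.i.d. from $\mu$; $L_\mu(w)=\mathbb E_{Z\sim\mu}\ell(w,Z)$, $L_s(w)=\frac1n\sum_i\ell(w,z_i)$ for $s=(z_1,\dots,z_n)$. The Gibbs posterior is $P^{\gamma,Q}_{W|S=s}(\mathrm dw)=e^{-\gamma L_s(w)}Q(\mathrm dw)/\mathbb E[e^{-\gamma L_s(\widetilde W)}]$, $\widetilde W\sim Q$. $\mathrm{risk}(\mu,P_{W|S})=\mathbb E[L_\mu(W)]$ under $\mu^{\otimes n}P_{W|S}$. A real random variable $X$ is $\sigma^2$-subgaussian if $\mathbb E[e^{\lambda(X-\mathbb EX)}]\le e^{\lambda^2\sigma^2/2}$ for all $\lambda\in\mathbb R$. $\delta_w$ is the Dirac measure at $w$ and $D$ is relative entropy, so $D(\delta_{\widehat w}\|Q)=\log(1/Q(\widehat w))$. *)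

theory Defs
  imports "HOL-Probability.Probability"
begin

text \<open>Integrability of the exponential moments is required, so that the Bochner
  integral really is the moment generating function.\<close>
definition subgaussian :: "'a measure \<Rightarrow> ('a \<Rightarrow> real) \<Rightarrow> real \<Rightarrow> bool" where
  "subgaussian M X \<sigma>sq \<longleftrightarrow>
     X \<in> borel_measurable M \<and> integrable M X \<and>
     (\<forall>t::real. integrable M (\<lambda>z. exp (t * (X z - (\<integral>x. X x \<partial>M)))) \<and>
        (\<integral>z. exp (t * (X z - (\<integral>x. X x \<partial>M))) \<partial>M) \<le> exp (t^2 * \<sigma>sq / 2))"

definition pop_loss :: "'z measure \<Rightarrow> ('w \<Rightarrow> 'z \<Rightarrow> real) \<Rightarrow> 'w \<Rightarrow> real" where
  "pop_loss \<mu> loss w = (\<integral>z. loss w z \<partial>\<mu>)"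

definition emp_loss :: "nat \<Rightarrow> ('w \<Rightarrow> 'z \<Rightarrow> real) \<Rightarrow> (nat \<Rightarrow> 'z) \<Rightarrow> 'w \<Rightarrow> real" where
  "emp_loss n loss s w = (\<Sum>i<n. loss w (s i)) / real n"

definition gibbs_posterior :: "real \<Rightarrow> 'w pmf \<Rightarrow> ('w \<Rightarrow> real) \<Rightarrow> 'w measure" where
  "gibbs_posterior \<gamma> Q Ls =
     density (measure_pmf Q)
       (\<lambda>w. ennreal (exp (- \<gamma> * Ls w) / (\<integral>w'. exp (- \<gamma> * Ls w') \<partial>measure_pmf Q)))"

definition gibbs_risk :: "nat \<Rightarrow> 'z measure \<Rightarrow> ('w \<Rightarrow> 'z \<Rightarrow> real) \<Rightarrow> real \<Rightarrow> 'w pmf \<Rightarrow> real" where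
  "gibbs_risk n \<mu> loss \<gamma> Q =
     (\<integral>s. (\<integral>w. pop_loss \<mu> loss w \<partial>gibbs_posterior \<gamma> Q (emp_loss n loss s))
        \<partial>PiM {..<n} (\<lambda>_. \<mu>))"

text \<open>D(delta_w || Q) = log(1/Q(w)), which is +infinity when Q(w) = 0.\<close>
definition KL_dirac :: "'w pmf \<Rightarrow> 'w \<Rightarrow> ereal" where
  "KL_dirac Q w = (if pmf Q w = 0 then \<infinity> else ereal (ln (1 / pmf Q w)))"

end

theory Submission
  imports Defs
begin

(* For a fixed sample s, Jensen's inequality under the Gibbs posterior P_s gives
   exp (gamma E_{P_s} L_mu) <= E_{P_s} exp (gamma L_mu) = N_s / E_Q exp (-gamma L_s)
   with N_s = E_Q exp (gamma (L_mu - L_s)), and the normalising constant is at least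
   Q(w_hat) exp (-gamma L_s(w_hat)).  Instead of Jensen for the logarithm, log N_s is bounded by
   its tangent N_s exp (-K) + K - 1 at exp K, which needs no integrability of log N_s.  Averaging
   over the sample, E L_S(w_hat) = L_mu(w_hat), and by Tonelli and independence the subgaussian
   bound gives E_S N_S <= exp K with K = gamma^2 sigma^2 / (2 n). *)

lemma measurable_case_prod_measure_pmf:
  fixes h :: "'a \<Rightarrow> 'w::countable \<Rightarrow> 'b"
  assumes "\<And>w. (\<lambda>x. h x w) \<in> M \<rightarrow>\<^sub>M N"
  shows "case_prod h \<in> M \<Otimes>\<^sub>M measure_pmf Q \<rightarrow>\<^sub>M N"
proof -
  have "snd \<in> M \<Otimes>\<^sub>M measure_pmf Q \<rightarrow>\<^sub>M count_space UNIV"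
    using measurable_snd[of M "measure_pmf Q"] by (simp add: measurable_cong_sets)
  from measurable_compose_countable[where f="\<lambda>w p. h (fst p) w", OF _ this] assms
  show ?thesis by (simp add: case_prod_beta')
qed

lemma borel_measurable_integral_measure_pmf:
  fixes h :: "'a \<Rightarrow> 'w::countable \<Rightarrow> real" and Q :: "'w pmf"
  assumes "\<And>w. (\<lambda>x. h x w) \<in> borel_measurable M"
  shows "(\<lambda>x. \<integral>w. h x w \<partial>Q) \<in> borel_measurable M"
  using sigma_finite_measure.borel_measurable_lebesgue_integral[where f=h,
      OF _ measurable_case_prod_measure_pmf[of h, OF assms]]
  by (simp add: prob_space_imp_sigma_finite prob_space_measure_pmf)

lemma pmf_mult_le_integral:
  assumes "integrable (measure_pmf Q) f" "\<And>x. 0 \<le> f x"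
  shows "pmf Q w * f w \<le> (\<integral>x. f x \<partial>Q)"
proof -
  have "integrable Q (\<lambda>x. f w * indicator {w} x)"
    by (intro integrable_mult_right measure_pmf.integrable_const_bound[where B=1]) auto
  then have "(\<integral>x. f w * indicator {w} x \<partial>Q) \<le> (\<integral>x. f x \<partial>Q)"
    by (rule integral_mono[OF _ assms(1)]) (auto simp: indicator_def assms(2))
  then show ?thesis by (simp add: measure_pmf_single mult.commute)
qed

lemma integral_exp_measure_pmf_pos:
  fixes f :: "'a \<Rightarrow> real"
  assumes "integrable (measure_pmf Q) (\<lambda>x. exp (f x))"
  shows "0 < (\<integral>x. exp (f x) \<partial>Q)"
proof -
  obtain w where "w \<in> set_pmf Q" using set_pmf_not_empty[of Q] by blast
  then have "0 < pmf Q w * exp (f w)" by (simp add: pmf_positive)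
  also have "\<dots> \<le> (\<integral>x. exp (f x) \<partial>Q)" by (rule pmf_mult_le_integral[OF assms]) simp
  finally show ?thesis .
qed

lemma integrable_of_integrable_exp_bounded_below:
  fixes f :: "'a \<Rightarrow> real"
  assumes "finite_measure M" "0 < \<gamma>" "f \<in> borel_measurable M" "\<And>x. c \<le> f x"
    and "integrable M (\<lambda>x. exp (\<gamma> * f x))"
  shows "integrable M f"
proof (rule Bochner_Integration.integrable_bound)
  show "integrable M (\<lambda>x. \<bar>c\<bar> + exp (- \<gamma> * c) / \<gamma> * exp (\<gamma> * f x))"
    using assms by (simp add: finite_measure.integrable_const)
  have "norm (f x) \<le> norm (\<bar>c\<bar> + exp (- \<gamma> * c) / \<gamma> * exp (\<gamma> * f x))" for x
  proof -
    have "\<gamma> * (f x - c) \<le> exp (\<gamma> * (f x - c))" by (smt (verit) exp_ge_add_one_self)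
    also have "\<dots> = exp (- \<gamma> * c) * exp (\<gamma> * f x)" by (simp add: mult_exp_exp algebra_simps)
    finally have "f x - c \<le> exp (- \<gamma> * c) / \<gamma> * exp (\<gamma> * f x)"
      using assms(2) by (simp add: field_simps)
    moreover have "0 \<le> exp (- \<gamma> * c) / \<gamma> * exp (\<gamma> * f x)" using assms(2) by simp
    ultimately show ?thesis using assms(4)[of x] by simp
  qed
  then show "AE x in M. norm (f x) \<le> norm (\<bar>c\<bar> + exp (- \<gamma> * c) / \<gamma> * exp (\<gamma> * f x))"
    by simp
qed (use assms in simp)

lemma integral_mono_AE_bounded_below:
  fixes F G :: "'a \<Rightarrow> real"
  assumes "finite_measure M" "F \<in> borel_measurable M" "integrable M G"
    and "AE x in M. c \<le> F x \<and> F x \<le> G x"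
  shows "(\<integral>x. F x \<partial>M) \<le> (\<integral>x. G x \<partial>M)"
proof (rule integral_mono_AE)
  show "integrable M F"
  proof (rule Bochner_Integration.integrable_bound[of M "\<lambda>x. \<bar>c\<bar> + \<bar>G x\<bar>"])
    show "integrable M (\<lambda>x. \<bar>c\<bar> + \<bar>G x\<bar>)"
      using assms by (simp add: finite_measure.integrable_const)
    show "AE x in M. norm (F x) \<le> norm (\<bar>c\<bar> + \<bar>G x\<bar>)"
      using assms(4) by eventually_elim auto
  qed (rule assms(2))
qed (use assms in \<open>auto elim: AE_mp\<close>)

lemma iterated_integral_measure_pmf_le:
  fixes h :: "'s \<Rightarrow> 'w::countable \<Rightarrow> real" and Q :: "'w pmf"
  assumes meas: "\<And>w. (\<lambda>s. h s w) \<in> borel_measurable M" and nonneg: "\<And>s w. 0 \<le> h s w"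
    and "0 \<le> B" and bound: "(\<integral>\<^sup>+s. \<integral>\<^sup>+w. ennreal (h s w) \<partial>Q \<partial>M) \<le> ennreal B"
  shows "AE s in M. integrable Q (h s)"
    and "integrable M (\<lambda>s. \<integral>w. h s w \<partial>Q)"
    and "(\<integral>s. \<integral>w. h s w \<partial>Q \<partial>M) \<le> B"
proof -
  have meas_nn: "(\<lambda>s. \<integral>\<^sup>+w. ennreal (h s w) \<partial>Q) \<in> borel_measurable M"
    using sigma_finite_measure.borel_measurable_nn_integral[where f="\<lambda>s w. ennreal (h s w)",
        OF _ measurable_case_prod_measure_pmf] meas
    by (simp add: prob_space_imp_sigma_finite prob_space_measure_pmf)
  have "AE s in M. (\<integral>\<^sup>+w. ennreal (h s w) \<partial>Q) \<noteq> \<infinity>"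
    using bound by (intro nn_integral_PInf_AE[OF meas_nn]) (auto simp: top_unique)
  then show int_AE: "AE s in M. integrable Q (h s)"
  proof eventually_elim
    case (elim s)
    then show "integrable Q (h s)"
      using nonneg by (intro integrableI_nonneg) (auto simp: top.not_eq_extremum)
  qed
  have "AE s in M. ennreal (\<integral>w. h s w \<partial>Q) = (\<integral>\<^sup>+w. ennreal (h s w) \<partial>Q)"
    using int_AE by eventually_elim (simp add: nn_integral_eq_integral nonneg)
  then have "(\<integral>\<^sup>+s. ennreal (\<integral>w. h s w \<partial>Q) \<partial>M) = (\<integral>\<^sup>+s. \<integral>\<^sup>+w. ennreal (h s w) \<partial>Q \<partial>M)"
    by (rule nn_integral_cong_AE)
  with bound have nn_le: "(\<integral>\<^sup>+s. ennreal (\<integral>w. h s w \<partial>Q) \<partial>M) \<le> ennreal B" by simp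
  have meas_int: "(\<lambda>s. \<integral>w. h s w \<partial>Q) \<in> borel_measurable M"
    by (rule borel_measurable_integral_measure_pmf[OF meas])
  show "integrable M (\<lambda>s. \<integral>w. h s w \<partial>Q)"
  proof (rule integrableI_nonneg[OF meas_int])
    show "AE s in M. 0 \<le> (\<integral>w. h s w \<partial>Q)" using nonneg by simp
    show "(\<integral>\<^sup>+s. ennreal (\<integral>w. h s w \<partial>Q) \<partial>M) < \<infinity>"
      using nn_le by (simp add: le_less_trans)
  qed
  show "(\<integral>s. \<integral>w. h s w \<partial>Q \<partial>M) \<le> B"
    using nn_le nonneg \<open>0 \<le> B\<close>
    by (subst integral_eq_nn_integral[OF meas_int]) (auto simp: enn2real_leI)
qed

lemma exp_le_imp_le_tangent:
  fixes a x b :: real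
  assumes "exp a \<le> x"
  shows "a \<le> x * exp (- b) + b - 1"
proof -
  have "1 + (a - b) \<le> exp (a - b)" by (rule exp_ge_add_one_self)
  also have "\<dots> = exp a * exp (- b)" by (simp add: exp_diff exp_minus field_simps)
  also have "\<dots> \<le> x * exp (- b)" using assms by simp
  finally show ?thesis by simp
qed

lemma integral_gibbs_posterior:
  fixes f :: "'w \<Rightarrow> real" and Q :: "'w pmf"
  shows "(\<integral>w. f w \<partial>gibbs_posterior \<gamma> Q Ls)
    = (\<integral>w. exp (- \<gamma> * Ls w) * f w \<partial>Q) / (\<integral>w. exp (- \<gamma> * Ls w) \<partial>Q)"
  unfolding gibbs_posterior_def by (subst integral_density) auto

lemma integrable_gibbs_posterior:
  fixes f :: "'w \<Rightarrow> real" and Q :: "'w pmf"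
  assumes "integrable Q (\<lambda>w. exp (- \<gamma> * Ls w) * f w)"
  shows "integrable (gibbs_posterior \<gamma> Q Ls) f"
  unfolding gibbs_posterior_def using assms by (subst integrable_density) auto

lemma prob_space_gibbs_posterior:
  fixes Q :: "'w pmf"
  assumes "integrable Q (\<lambda>w. exp (- \<gamma> * Ls w))"
  shows "prob_space (gibbs_posterior \<gamma> Q Ls)"
proof (rule prob_spaceI)
  let ?Z = "\<integral>w. exp (- \<gamma> * Ls w) \<partial>Q"
  have "0 < ?Z" using integral_exp_measure_pmf_pos[OF assms] .
  then have "(\<integral>\<^sup>+w. ennreal (exp (- \<gamma> * Ls w) / ?Z) \<partial>Q) = ennreal (?Z / ?Z)"
    using assms by (subst nn_integral_eq_integral) auto
  with \<open>0 < ?Z\<close> show "emeasure (gibbs_posterior \<gamma> Q Ls) (space (gibbs_posterior \<gamma> Q Ls)) = 1"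
    by (simp add: gibbs_posterior_def emeasure_density)
qed

lemma gibbs_posterior_integral_bounds:
  fixes Q :: "'w pmf" and Lm Ls :: "'w \<Rightarrow> real"
  assumes "0 < \<gamma>" and lower: "\<And>w. c \<le> Lm w"
    and int: "integrable Q (\<lambda>w. exp (\<gamma> * (Lm w - Ls w)))"
  shows "c \<le> (\<integral>w. Lm w \<partial>gibbs_posterior \<gamma> Q Ls)"
    and "pmf Q v * exp (\<gamma> * ((\<integral>w. Lm w \<partial>gibbs_posterior \<gamma> Q Ls) - Ls v))
           \<le> (\<integral>w. exp (\<gamma> * (Lm w - Ls w)) \<partial>Q)"
proof -
  let ?P = "gibbs_posterior \<gamma> Q Ls"
  define Z where "Z = (\<integral>w. exp (- \<gamma> * Ls w) \<partial>Q)"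
  define N where "N = (\<integral>w. exp (\<gamma> * (Lm w - Ls w)) \<partial>Q)"
  define F where "F = (\<integral>w. Lm w \<partial>?P)"
  have tilt: "exp (- \<gamma> * Ls w) * exp (\<gamma> * Lm w) = exp (\<gamma> * (Lm w - Ls w))" for w
    by (simp add: mult_exp_exp algebra_simps)
  have iZ: "integrable Q (\<lambda>w. exp (- \<gamma> * Ls w))"
  proof (rule Bochner_Integration.integrable_bound[OF integrable_mult_right[OF int]])
    have "exp (- \<gamma> * Ls w) \<le> exp (- \<gamma> * c) * exp (\<gamma> * (Lm w - Ls w))" for w
      using lower[of w] \<open>0 < \<gamma>\<close> by (simp add: mult_exp_exp algebra_simps)
    then show "AE w in Q. norm (exp (- \<gamma> * Ls w)) \<le> norm (exp (- \<gamma> * c) * exp (\<gamma> * (Lm w - Ls w)))"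
      by simp
  qed simp
  have "0 < Z" unfolding Z_def by (rule integral_exp_measure_pmf_pos) (use iZ in simp)
  interpret P: prob_space ?P by (rule prob_space_gibbs_posterior[OF iZ])
  have iexp: "integrable ?P (\<lambda>w. exp (\<gamma> * Lm w))"
    by (rule integrable_gibbs_posterior) (unfold tilt, rule int)
  have iLm: "integrable ?P Lm"
    by (rule integrable_of_integrable_exp_bounded_below[OF P.finite_measure \<open>0 < \<gamma>\<close> _ lower iexp])
      (simp add: gibbs_posterior_def)
  show "c \<le> (\<integral>w. Lm w \<partial>?P)" using P.integral_ge_const[OF iLm] lower by simp
  have "exp (\<gamma> * F) \<le> (\<integral>w. exp (\<gamma> * Lm w) \<partial>?P)"
    unfolding F_def using \<open>0 < \<gamma>\<close>
    by (intro P.jensens_inequality[where I=UNIV, OF iLm _ _ iexp convex_on_exp]) simp_all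
  also have "\<dots> = N / Z" unfolding integral_gibbs_posterior tilt N_def Z_def ..
  finally have jensen: "exp (\<gamma> * F) \<le> N / Z" .
  have "pmf Q v * exp (- \<gamma> * Ls v) \<le> Z"
    unfolding Z_def by (rule pmf_mult_le_integral[OF iZ]) simp
  have "pmf Q v * exp (\<gamma> * (F - Ls v)) = pmf Q v * exp (- \<gamma> * Ls v) * exp (\<gamma> * F)"
    by (simp add: mult_exp_exp algebra_simps)
  also have "\<dots> \<le> Z * (N / Z)"
    using \<open>pmf Q v * exp (- \<gamma> * Ls v) \<le> Z\<close> jensen \<open>0 < Z\<close> by (intro mult_mono) auto
  also have "\<dots> = N" using \<open>0 < Z\<close> by simp
  finally show "pmf Q v * exp (\<gamma> * ((\<integral>w. Lm w \<partial>?P) - Ls v)) \<le> (\<integral>w. exp (\<gamma> * (Lm w - Ls w)) \<partial>Q)"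
    unfolding F_def N_def .
qed

lemma subgaussian_nn_integral_exp_le:
  assumes "subgaussian M X \<sigma>sq"
  shows "(\<integral>\<^sup>+z. ennreal (exp (t * (X z - (\<integral>x. X x \<partial>M)))) \<partial>M) \<le> ennreal (exp (t\<^sup>2 * \<sigma>sq / 2))"
  using assms unfolding subgaussian_def by (subst nn_integral_eq_integral) (auto intro: ennreal_leI)

lemma nn_integral_exp_emp_loss_deviation_le:
  fixes loss :: "'w \<Rightarrow> 'z \<Rightarrow> real"
  assumes "1 \<le> n" "prob_space \<mu>" and subg: "subgaussian \<mu> (loss w) \<sigma>sq"
  shows "(\<integral>\<^sup>+s. ennreal (exp (\<gamma> * (pop_loss \<mu> loss w - emp_loss n loss s w))) \<partial>PiM {..<n} (\<lambda>_. \<mu>))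
    \<le> ennreal (exp (\<gamma>\<^sup>2 * \<sigma>sq / (2 * real n)))"
proof -
  interpret product_prob_space "\<lambda>_. \<mu>" "{..<n}"
    using \<open>prob_space \<mu>\<close> by (simp add: product_prob_space_def product_prob_space_axioms_def
        product_sigma_finite_def prob_space_imp_sigma_finite)
  define t where "t = - \<gamma> / real n"
  define L where "L = pop_loss \<mu> loss w"
  have [measurable]: "loss w \<in> borel_measurable \<mu>" using subg by (simp add: subgaussian_def)
  have "\<gamma> * (L - emp_loss n loss s w) = (\<Sum>i<n. t * (loss w (s i) - L))" for s
  proof -
    have "(\<Sum>i<n. t * (loss w (s i) - L)) = t * (\<Sum>i<n. loss w (s i)) - real n * t * L"
      by (simp add: sum_subtractf sum_distrib_left[symmetric] right_diff_distrib)
    also have "\<dots> = \<gamma> * (L - emp_loss n loss s w)"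
      using \<open>1 \<le> n\<close> by (simp add: emp_loss_def t_def field_simps)
    finally show ?thesis by simp
  qed
  then have "(\<integral>\<^sup>+s. ennreal (exp (\<gamma> * (L - emp_loss n loss s w))) \<partial>PiM {..<n} (\<lambda>_. \<mu>))
      = (\<integral>\<^sup>+s. (\<Prod>i<n. ennreal (exp (t * (loss w (s i) - L)))) \<partial>PiM {..<n} (\<lambda>_. \<mu>))"
    by (simp add: exp_sum prod_ennreal)
  also have "\<dots> = (\<Prod>i<n. \<integral>\<^sup>+z. ennreal (exp (t * (loss w z - L))) \<partial>\<mu>)"
    by (rule product_nn_integral_prod) auto
  also have "\<dots> \<le> (\<Prod>i<n. ennreal (exp (t\<^sup>2 * \<sigma>sq / 2)))"
    using subgaussian_nn_integral_exp_le[OF subg, of t]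
    by (simp add: power_mono L_def pop_loss_def)
  also have "\<dots> = ennreal (exp (\<gamma>\<^sup>2 * \<sigma>sq / (2 * real n)))"
    using \<open>1 \<le> n\<close> by (simp add: ennreal_power exp_of_nat_mult[symmetric] t_def power2_eq_square field_simps)
  finally show ?thesis by (simp add: L_def)
qed

lemma
  fixes loss :: "'w \<Rightarrow> 'z \<Rightarrow> real"
  assumes "prob_space \<mu>" "integrable \<mu> (loss w)"
  shows integrable_emp_loss: "integrable (PiM {..<n} (\<lambda>_. \<mu>)) (\<lambda>s. emp_loss n loss s w)"
    and integral_emp_loss: "1 \<le> n \<Longrightarrow> (\<integral>s. emp_loss n loss s w \<partial>PiM {..<n} (\<lambda>_. \<mu>)) = pop_loss \<mu> loss w"
proof -
  interpret product_prob_space "\<lambda>_. \<mu>" "{..<n}"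
    using \<open>prob_space \<mu>\<close> by (simp add: product_prob_space_def product_prob_space_axioms_def
        product_sigma_finite_def prob_space_imp_sigma_finite)
  have coord: "distr (PiM {..<n} (\<lambda>_. \<mu>)) \<mu> (\<lambda>s. s i) = \<mu>" if "i < n" for i
    using PiM_component[of i] that by simp
  have int_i: "integrable (PiM {..<n} (\<lambda>_. \<mu>)) (\<lambda>s. loss w (s i))"
    and integral_i: "(\<integral>s. loss w (s i) \<partial>PiM {..<n} (\<lambda>_. \<mu>)) = pop_loss \<mu> loss w" if "i < n" for i
  proof -
    have [measurable]: "loss w \<in> borel_measurable \<mu>" using assms(2) by simp
    show "integrable (PiM {..<n} (\<lambda>_. \<mu>)) (\<lambda>s. loss w (s i))"
      using assms(2) integrable_distr_eq[of "\<lambda>s. s i" "PiM {..<n} (\<lambda>_. \<mu>)" \<mu> "loss w"]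
      by (simp add: coord[OF that] that)
    show "(\<integral>s. loss w (s i) \<partial>PiM {..<n} (\<lambda>_. \<mu>)) = pop_loss \<mu> loss w"
      using integral_distr[of "\<lambda>s. s i" "PiM {..<n} (\<lambda>_. \<mu>)" \<mu> "loss w"]
      by (simp add: coord[OF that] that pop_loss_def)
  qed
  show "integrable (PiM {..<n} (\<lambda>_. \<mu>)) (\<lambda>s. emp_loss n loss s w)"
    unfolding emp_loss_def using int_i by (auto intro!: Bochner_Integration.integrable_sum integrable_divide_zero)
  show "1 \<le> n \<Longrightarrow> (\<integral>s. emp_loss n loss s w \<partial>PiM {..<n} (\<lambda>_. \<mu>)) = pop_loss \<mu> loss w"
    unfolding emp_loss_def using int_i integral_i by (simp add: Bochner_Integration.integral_sum)
qed

lemma expected_gibbs_posterior_risk_le: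
  fixes M :: "'s measure" and Q :: "'w::countable pmf"
    and Lm :: "'w \<Rightarrow> real" and Ls :: "'s \<Rightarrow> 'w \<Rightarrow> real"
  assumes "prob_space M" "0 < \<gamma>" "0 < pmf Q v"
    and meas[measurable]: "\<And>w. (\<lambda>s. Ls s w) \<in> borel_measurable M"
    and min: "\<And>w. Lm v \<le> Lm w"
    and mgf: "\<And>w. (\<integral>\<^sup>+s. ennreal (exp (\<gamma> * (Lm w - Ls s w))) \<partial>M) \<le> ennreal (exp K)"
    and unbiased: "integrable M (\<lambda>s. Ls s v)" "(\<integral>s. Ls s v \<partial>M) = Lm v"
  shows "(\<integral>s. (\<integral>w. Lm w \<partial>gibbs_posterior \<gamma> Q (Ls s)) \<partial>M) \<le> Lm v + (K - ln (pmf Q v)) / \<gamma>"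
proof -
  interpret prob_space M by fact
  interpret pair_sigma_finite M Q
    by (simp add: pair_sigma_finite_def prob_space_imp_sigma_finite prob_space_measure_pmf \<open>prob_space M\<close>)
  define h where "h s w = exp (\<gamma> * (Lm w - Ls s w))" for s w
  define N where "N s = (\<integral>w. h s w \<partial>Q)" for s
  define F where "F s = (\<integral>w. Lm w \<partial>gibbs_posterior \<gamma> Q (Ls s))" for s
  define G where "G s = Ls s v + (N s * exp (- K) + K - 1 - ln (pmf Q v)) / \<gamma>" for s
  have meas_h: "\<And>w. (\<lambda>s. h s w) \<in> borel_measurable M" unfolding h_def by measurable
  have "(\<integral>\<^sup>+s. \<integral>\<^sup>+w. ennreal (h s w) \<partial>Q \<partial>M) = (\<integral>\<^sup>+w. \<integral>\<^sup>+s. ennreal (h s w) \<partial>M \<partial>Q)"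
    using measurable_case_prod_measure_pmf[of "\<lambda>s w. ennreal (h s w)", OF _] meas_h
    by (intro Fubini'[symmetric]) auto
  also have "\<dots> \<le> (\<integral>\<^sup>+w. ennreal (exp K) \<partial>Q)"
    unfolding h_def by (intro nn_integral_mono mgf)
  finally have "(\<integral>\<^sup>+s. \<integral>\<^sup>+w. ennreal (h s w) \<partial>Q \<partial>M) \<le> ennreal (exp K)" by simp
  moreover have "0 \<le> h s w" for s w by (simp add: h_def)
  ultimately have iterated: "AE s in M. integrable Q (h s)" "integrable M N" "(\<integral>s. N s \<partial>M) \<le> exp K"
    unfolding N_def using iterated_integral_measure_pmf_le[OF meas_h, where B="exp K"] by auto
  have "AE s in M. Lm v \<le> F s \<and> F s \<le> G s"
    using iterated(1)
  proof eventually_elim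
    case (elim s)
    note bounds = gibbs_posterior_integral_bounds[OF \<open>0 < \<gamma>\<close> min elim[unfolded h_def]]
    have "exp (\<gamma> * (F s - Ls s v) + ln (pmf Q v)) \<le> N s"
      using bounds(2)[of v] \<open>0 < pmf Q v\<close> by (simp add: exp_add F_def N_def h_def mult.commute)
    then have "\<gamma> * (F s - Ls s v) + ln (pmf Q v) \<le> N s * exp (- K) + K - 1"
      by (rule exp_le_imp_le_tangent)
    then have "F s \<le> G s" using \<open>0 < \<gamma>\<close> by (simp add: G_def field_simps)
    with bounds(1) show ?case by (simp add: F_def)
  qed
  moreover have "F \<in> borel_measurable M"
    unfolding F_def integral_gibbs_posterior
    by (intro borel_measurable_divide borel_measurable_integral_measure_pmf) measurable
  moreover have "integrable M G"
    unfolding G_def using iterated(2) unbiased(1) by simp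
  ultimately have "(\<integral>s. F s \<partial>M) \<le> (\<integral>s. G s \<partial>M)"
    by (intro integral_mono_AE_bounded_below) auto
  also have "(\<integral>s. G s \<partial>M) = Lm v + ((\<integral>s. N s \<partial>M) * exp (- K) + K - 1 - ln (pmf Q v)) / \<gamma>"
    unfolding G_def using iterated(2) unbiased by (simp add: prob_space)
  also have "\<dots> \<le> Lm v + (K - ln (pmf Q v)) / \<gamma>"
    using iterated(3) \<open>0 < \<gamma>\<close> by (simp add: divide_right_mono exp_minus field_simps)
  finally show ?thesis by (simp add: F_def)
qed

theorem proposition3:
  fixes loss :: "'w::countable \<Rightarrow> 'z \<Rightarrow> real"
    and Q :: "'w pmf" and \<mu> :: "'z measure"
    and \<gamma> \<sigma> :: real and n :: nat and w_hat :: 'w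
  assumes "n \<ge> 1"
    and "\<gamma> > 0"
    and "prob_space \<mu>"
    and "\<And>w. subgaussian \<mu> (loss w) (\<sigma>^2)"
    and "\<And>w. pop_loss \<mu> loss w_hat \<le> pop_loss \<mu> loss w"
  shows "ereal (gibbs_risk n \<mu> loss \<gamma> Q)
     \<le> ereal (INF w. pop_loss \<mu> loss w) + KL_dirac Q w_hat / ereal \<gamma>
        + ereal (\<gamma> * \<sigma>^2 / (2 * real n))"
proof (cases "pmf Q w_hat = 0")
  case True
  then show ?thesis using \<open>\<gamma> > 0\<close> by (simp add: KL_dirac_def)
next
  case False
  let ?K = "\<gamma>\<^sup>2 * \<sigma>\<^sup>2 / (2 * real n)"
  have integrable_loss: "integrable \<mu> (loss w)" for w
    using assms(4) by (simp add: subgaussian_def)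
  have "gibbs_risk n \<mu> loss \<gamma> Q \<le> pop_loss \<mu> loss w_hat + (?K - ln (pmf Q w_hat)) / \<gamma>"
    unfolding gibbs_risk_def
    using prob_space_PiM[OF \<open>prob_space \<mu>\<close>]
      borel_measurable_integrable[OF integrable_emp_loss[OF \<open>prob_space \<mu>\<close> integrable_loss]]
      nn_integral_exp_emp_loss_deviation_le[OF \<open>n \<ge> 1\<close> \<open>prob_space \<mu>\<close> assms(4)]
      integrable_emp_loss[OF \<open>prob_space \<mu>\<close> integrable_loss]
      integral_emp_loss[OF \<open>prob_space \<mu>\<close> integrable_loss \<open>n \<ge> 1\<close>] assms(2,5) False
    by (intro expected_gibbs_posterior_risk_le) (auto simp: order_less_le)
  moreover have "(INF w. pop_loss \<mu> loss w) = pop_loss \<mu> loss w_hat"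
    using assms(5) by (intro cInf_eq_minimum) auto
  ultimately show ?thesis
    using \<open>\<gamma> > 0\<close> False by (simp add: KL_dirac_def ln_div power2_eq_square field_simps)
qed

end
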